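(* Let $\mathbb{K}$ be an algebraically closed field with $\operatorname{char}(\mathbb{K})\neq 2$, and let $q\in\mathbb{K}^{\times}=\mathbb{K}\setminus\{0\}$. Let \[ A=\frac{\mathbb{K}\langle x_1,x_2,x_3,x_4\rangle}{\langle g_1,\ldots,g_6\rangle}, \] where \[ g_1=x_1x_2-x_2x_1,\quad g_2=x_3x_2-x_2x_3,\quad g_3=x_1x_3-x_3x_1, \] \[ g_4=x_4x_1-x_1x_4+q(x_4x_3-x_1x_2),\quad g_5=x_4x_2-x_2x_4,\quad g_6=x_4x_3-x_3x_4. \] Then the point scheme of $A$ is $\mathcal{V}\big(x_2(x_1x_2-x_3x_4),\,x_3(x_1x_2-x_3x_4)\big)\subset\mathbb{P}^3$, which contains the double line $\mathcal{V}(x_2,x_3)$.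
   Context: Point scheme: for a quadratic algebra $A=\mathbb{K}\langle x_1,\dots,x_4\rangle/\langle g_1,\dots,g_6\rangle$ with each $g_i=\sum_{j,k}c_{ijk}x_jx_k$ homogeneous of degree 2, let $D$ be the $6\times 4$ matrix with entries $D_{ik}=\sum_j c_{ijk}x_j$ (linear forms in $x_1,\dots,x_4$), so that $g_i(\alpha,\beta):=\sum_{j,k}c_{ijk}\alpha_j\beta_k=(D(\alpha)\beta)_i$ for $(\alpha,\beta)\in\mathbb{P}^3\times\mathbb{P}^3$. The point scheme of $A$ is the subscheme of $\mathbb{P}^3$ (homogeneous coordinates $x_1,\dots,x_4$) defined by the vanishing of all $4\times 4$ minors of $D$; its points are the $\alpha\in\mathbb{P}^3$ for which there exists $\beta\in\mathbb{P}^3$ with $g_i(\alpha,\beta)=0$ for all $i$. For homogeneous polynomials $f_1,\dots,f_r$, $\mathcal{V}(f_1,\dots,f_r)$ denotes their zero locus (subscheme) in $\mathbb{P}^3$. *)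

theory Defs
  imports "HOL-Library.Poly_Mapping" "HOL-Combinatorics.Permutations"
          "HOL-Computational_Algebra.Polynomial"
begin

type_synonym 'k mpoly = "(nat \<Rightarrow>\<^sub>0 nat) \<Rightarrow>\<^sub>0 'k"

definition Var :: "nat \<Rightarrow> 'k::comm_ring_1 mpoly" where
  "Var j = Poly_Mapping.single (Poly_Mapping.single j 1) 1"

definition Const :: "'k::comm_ring_1 \<Rightarrow> 'k mpoly" where
  "Const c = Poly_Mapping.single 0 c"

definition ideal_gen :: "'k::comm_ring_1 mpoly set \<Rightarrow> 'k mpoly set" where
  "ideal_gen S = {f. \<exists>T a. finite T \<and> T \<subseteq> S \<and> f = (\<Sum>s\<in>T. a s * s)}"

definition saturation :: "'k::comm_ring_1 mpoly set \<Rightarrow> 'k mpoly set" where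
  "saturation I = {f. \<exists>N. \<forall>j\<in>{1..4}. Var j ^ N * f \<in> I}"

text \<open>The closed subscheme V(S) of P^3 is represented by its saturated ideal;
  two sets of homogeneous polynomials define the same subscheme iff these agree,
  and V(S) \<subseteq> V(T) as subschemes iff Vsch T \<subseteq> Vsch S.\<close>
definition Vsch :: "'k::comm_ring_1 mpoly set \<Rightarrow> 'k mpoly set" where
  "Vsch S = saturation (ideal_gen S)"

text \<open>c i j k is the coefficient of x_j x_k in g_i (i \<in> {1..6}, j,k \<in> {1..4}).\<close>
definition Dmat :: "(nat \<Rightarrow> nat \<Rightarrow> nat \<Rightarrow> 'k::comm_ring_1) \<Rightarrow> nat \<Rightarrow> nat \<Rightarrow> 'k mpoly" where
  "Dmat c i k = (\<Sum>j\<in>{1..4}. Const (c i j k) * Var j)"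

definition det4 :: "(nat \<Rightarrow> nat \<Rightarrow> 'a::comm_ring_1) \<Rightarrow> 'a" where
  "det4 M = (\<Sum>p | p permutes {1..4}. of_int (sign p) * (\<Prod>i\<in>{1..4}. M i (p i)))"

definition minors4 :: "(nat \<Rightarrow> nat \<Rightarrow> nat \<Rightarrow> 'k::comm_ring_1) \<Rightarrow> 'k mpoly set" where
  "minors4 c = {det4 (\<lambda>a b. Dmat c (r a) b) | r.
      (\<forall>a\<in>{1..4}. r a \<in> {1..6}) \<and>
      (\<forall>a\<in>{1..4}. \<forall>b\<in>{1..4}. a < b \<longrightarrow> r a < r b)}"

definition point_scheme :: "(nat \<Rightarrow> nat \<Rightarrow> nat \<Rightarrow> 'k::comm_ring_1) \<Rightarrow> 'k mpoly set" where
  "point_scheme c = Vsch (minors4 c)"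

definition coeffs_A :: "'k::comm_ring_1 \<Rightarrow> nat \<Rightarrow> nat \<Rightarrow> nat \<Rightarrow> 'k" where
  "coeffs_A q i j k =
     (if (i,j,k) = (1,1,2) then 1 else if (i,j,k) = (1,2,1) then -1
      else if (i,j,k) = (2,3,2) then 1 else if (i,j,k) = (2,2,3) then -1
      else if (i,j,k) = (3,1,3) then 1 else if (i,j,k) = (3,3,1) then -1
      else if (i,j,k) = (4,4,1) then 1 else if (i,j,k) = (4,1,4) then -1
      else if (i,j,k) = (4,4,3) then q else if (i,j,k) = (4,1,2) then -q
      else if (i,j,k) = (5,4,2) then 1 else if (i,j,k) = (5,2,4) then -1
      else if (i,j,k) = (6,4,3) then 1 else if (i,j,k) = (6,3,4) then -1
      else 0)"

definition alg_closed_field :: "'k::field itself \<Rightarrow> bool" where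
  "alg_closed_field _ \<longleftrightarrow> (\<forall>p::'k poly. degree p > 0 \<longrightarrow> (\<exists>x. poly p x = 0))"

end

theory Submission
  imports Defs
begin

text \<open>Of the fifteen 4x4 minors of D, seven vanish and each of the other eight is, up to
  the unit \<open>\<plusminus>q\<close>, one of the products \<open>x\<^sub>j x\<^sub>k F\<close> with \<open>j \<in> {1..4}\<close>,
  \<open>k \<in> {2,3}\<close> and \<open>F = x\<^sub>1x\<^sub>2 - x\<^sub>3x\<^sub>4\<close>; every such product occurs. Hence the ideal
  of minors is \<open>(x\<^sub>1,\<dots>,x\<^sub>4) \<cdot> (x\<^sub>2F, x\<^sub>3F)\<close>, which has the same saturation as
  \<open>(x\<^sub>2F, x\<^sub>3F)\<close>. Finally \<open>x\<^sub>2F = x\<^sub>1x\<^sub>2\<^sup>2 - x\<^sub>4 \<cdot> x\<^sub>2x\<^sub>3\<close> and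
  \<open>x\<^sub>3F = x\<^sub>1 \<cdot> x\<^sub>2x\<^sub>3 - x\<^sub>4x\<^sub>3\<^sup>2\<close> lie in \<open>(x\<^sub>2,x\<^sub>3)\<^sup>2\<close>.\<close>

interpretation ideal: module "(*) :: 'a::comm_ring_1 \<Rightarrow> 'a \<Rightarrow> 'a"
  by standard (simp_all add: algebra_simps)

declare ideal.scale_scale [simp del]
  \<comment> \<open>as a simp rule it reassociates products to the left and loops against \<open>algebra_simps\<close>\<close>

lemma ideal_gen_eq_span: "ideal_gen S = ideal.span S"
  unfolding ideal_gen_def ideal.span_explicit by blast

lemma zero_mem_ideal_gen: "0 \<in> ideal_gen S"
  unfolding ideal_gen_eq_span by (rule ideal.span_zero)

lemma add_mem_ideal_gen: "f \<in> ideal_gen S \<Longrightarrow> g \<in> ideal_gen S \<Longrightarrow> f + g \<in> ideal_gen S"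
  unfolding ideal_gen_eq_span by (rule ideal.span_add)

lemma mult_mem_ideal_gen: "s \<in> S \<Longrightarrow> a * s \<in> ideal_gen S"
  unfolding ideal_gen_eq_span by (intro ideal.span_scale ideal.span_base)

lemma ideal_gen_subset: "S \<subseteq> ideal_gen T \<Longrightarrow> ideal_gen S \<subseteq> ideal_gen T"
  unfolding ideal_gen_eq_span by (intro ideal.span_minimal ideal.subspace_span)

lemma mult_mem_ideal_gen_if_mult_generators:
  assumes "\<And>s. s \<in> S \<Longrightarrow> v * s \<in> ideal_gen T" and "f \<in> ideal_gen S"
  shows "v * f \<in> ideal_gen T"
  using assms(2) unfolding ideal_gen_eq_span
proof (induction rule: ideal.span_induct_alt)
  case base
  show ?case by (simp add: ideal.span_zero)
next
  case (step c s f)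
  have "v * s \<in> ideal.span T"
    using assms(1)[OF step(1)] unfolding ideal_gen_eq_span .
  then have "c * (v * s) + v * f \<in> ideal.span T"
    using step(2) by (rule ideal.span_add[OF ideal.span_scale])
  moreover have "v * (c * s + f) = c * (v * s) + v * f"
    by (simp add: algebra_simps)
  ultimately show ?case
    by simp
qed

lemma saturation_mono: "I \<subseteq> J \<Longrightarrow> saturation I \<subseteq> saturation J"
  unfolding saturation_def by blast

lemma saturation_subset_if_Var_mult:
  assumes "\<And>g j. g \<in> I \<Longrightarrow> j \<in> {1..4} \<Longrightarrow> Var j * g \<in> J"
  shows "saturation I \<subseteq> saturation J"
proof
  fix f assume "f \<in> saturation I"
  then obtain N where N: "\<forall>j\<in>{1..4}. Var j ^ N * f \<in> I"
    unfolding saturation_def by blast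
  have "Var j ^ Suc N * f \<in> J" if "j \<in> {1..4}" for j
  proof -
    have "Var j * (Var j ^ N * f) \<in> J"
      using N that by (intro assms) auto
    then show ?thesis
      by (simp only: power_Suc mult.assoc)
  qed
  then show "f \<in> saturation J"
    unfolding saturation_def by blast
qed

lemma Vsch_subset:
  "S \<subseteq> ideal_gen T \<Longrightarrow> Vsch S \<subseteq> Vsch T"
  unfolding Vsch_def by (intro saturation_mono ideal_gen_subset)

lemma Vsch_subset_if_Var_mult:
  assumes "\<And>s j. s \<in> S \<Longrightarrow> j \<in> {1..4} \<Longrightarrow> Var j * s \<in> ideal_gen T"
  shows "Vsch S \<subseteq> Vsch T"
  unfolding Vsch_def
proof (rule saturation_subset_if_Var_mult)
  fix g and j :: nat assume "g \<in> ideal_gen S" and "j \<in> {1..4}"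
  then show "Var j * g \<in> ideal_gen T"
    by (intro mult_mem_ideal_gen_if_mult_generators[of S "Var j" T g] assms)
qed

lemma Const_one: "Const 1 = 1"
  by (simp add: Const_def)

lemma Const_mult: "Const c * Const d = Const (c * d)"
  by (simp add: Const_def mult_single)

lemma Const_uminus: "Const (- c) = - Const c"
  by (simp add: Const_def single_uminus)

lemma mem_ideal_gen_if_Const_mult_mem:
  fixes c :: "'k::field"
  assumes "Const c * f \<in> S" and "c \<noteq> 0"
  shows "f \<in> ideal_gen S"
proof -
  have "Const (inverse c) * (Const c * f) \<in> ideal_gen S"
    using assms(1) by (rule mult_mem_ideal_gen)
  also have "Const (inverse c) * (Const c * f) = f"
    using assms(2) by (simp only: mult.assoc[symmetric] Const_mult) (simp add: Const_one)
  finally show ?thesis .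
qed

declare One_nat_def [simp del]
  \<comment> \<open>keeps the index \<open>1\<close> a numeral, so that the tables of entries and minors below apply\<close>

lemma atLeastAtMost_1_4: "{1..4::nat} = {1, 2, 3, 4}"
  by auto

lemma det4_expand: "det4 M =
    M 1 1 * M 2 2 * M 3 3 * M 4 4 - M 1 1 * M 2 2 * M 3 4 * M 4 3
  - M 1 1 * M 2 3 * M 3 2 * M 4 4 + M 1 1 * M 2 3 * M 3 4 * M 4 2
  + M 1 1 * M 2 4 * M 3 2 * M 4 3 - M 1 1 * M 2 4 * M 3 3 * M 4 2
  - M 1 2 * M 2 1 * M 3 3 * M 4 4 + M 1 2 * M 2 1 * M 3 4 * M 4 3
  + M 1 2 * M 2 3 * M 3 1 * M 4 4 - M 1 2 * M 2 3 * M 3 4 * M 4 1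
  - M 1 2 * M 2 4 * M 3 1 * M 4 3 + M 1 2 * M 2 4 * M 3 3 * M 4 1
  + M 1 3 * M 2 1 * M 3 2 * M 4 4 - M 1 3 * M 2 1 * M 3 4 * M 4 2
  - M 1 3 * M 2 2 * M 3 1 * M 4 4 + M 1 3 * M 2 2 * M 3 4 * M 4 1
  + M 1 3 * M 2 4 * M 3 1 * M 4 2 - M 1 3 * M 2 4 * M 3 2 * M 4 1
  - M 1 4 * M 2 1 * M 3 2 * M 4 3 + M 1 4 * M 2 1 * M 3 3 * M 4 2
  + M 1 4 * M 2 2 * M 3 1 * M 4 3 - M 1 4 * M 2 2 * M 3 3 * M 4 1
  - M 1 4 * M 2 3 * M 3 1 * M 4 2 + M 1 4 * M 2 3 * M 3 2 * M 4 1"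
proof -
  have sign_transpose_compose:
    "sign (transpose a b \<circ> p) = (if a = b then 1 else - 1) * sign p" if "permutation p" for a b p
    using that by (simp add: sign_compose sign_swap_id permutation_swap_id)
  have permutation_transpose_compose: "permutation (transpose a b \<circ> p)" if "permutation p" for a b p
    using that by (simp add: permutation_compose permutation_swap_id)
  show ?thesis
    unfolding det4_def atLeastAtMost_1_4
    by (simp add: sum_over_permutations_insert sign_transpose_compose sign_swap_id
        permutation_transpose_compose permutation_swap_id)
qed

lemma det4_cong_rows:
  "M 1 = N 1 \<Longrightarrow> M 2 = N 2 \<Longrightarrow> M 3 = N 3 \<Longrightarrow> M 4 = N 4 \<Longrightarrow> det4 M = det4 N"
  unfolding det4_expand by simp

definition minor4 :: "(nat \<Rightarrow> nat \<Rightarrow> nat \<Rightarrow> 'k::comm_ring_1) \<Rightarrow> nat \<Rightarrow> nat \<Rightarrow> nat \<Rightarrow> nat \<Rightarrow> 'k mpoly"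
  where "minor4 c r\<^sub>1 r\<^sub>2 r\<^sub>3 r\<^sub>4 =
    det4 (\<lambda>i. Dmat c (if i = 1 then r\<^sub>1 else if i = 2 then r\<^sub>2 else if i = 3 then r\<^sub>3 else r\<^sub>4))"

lemma increasing4_cases:
  fixes a b c d :: nat
  assumes "1 \<le> a" "a < b" "b < c" "c < d" "d \<le> 6"
  shows "(a, b, c, d) \<in> {(1,2,3,4), (1,2,3,5), (1,2,3,6), (1,2,4,5), (1,2,4,6), (1,2,5,6),
    (1,3,4,5), (1,3,4,6), (1,3,5,6), (1,4,5,6), (2,3,4,5), (2,3,4,6), (2,3,5,6), (2,4,5,6),
    (3,4,5,6)}"
proof -
  have "a \<in> {1,2,3}" "b \<in> {2,3,4}" "c \<in> {3,4,5}" "d \<in> {4,5,6}"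
    using assms by auto
  then show ?thesis
    using assms by (elim insertE emptyE) simp_all
qed

lemma minor4_mem_minors4:
  assumes "1 \<le> r\<^sub>1" "r\<^sub>1 < r\<^sub>2" "r\<^sub>2 < r\<^sub>3" "r\<^sub>3 < r\<^sub>4" "r\<^sub>4 \<le> 6"
  shows "minor4 c r\<^sub>1 r\<^sub>2 r\<^sub>3 r\<^sub>4 \<in> minors4 c"
  unfolding minors4_def minor4_def using assms
  by (intro CollectI exI[of _ "\<lambda>i. if i = 1 then r\<^sub>1 else if i = 2 then r\<^sub>2 else if i = 3 then r\<^sub>3 else r\<^sub>4"])
    (simp add: atLeastAtMost_1_4)

lemma minors4_eq:
  "minors4 c = {minor4 c 1 2 3 4, minor4 c 1 2 3 5, minor4 c 1 2 3 6, minor4 c 1 2 4 5,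
    minor4 c 1 2 4 6, minor4 c 1 2 5 6, minor4 c 1 3 4 5, minor4 c 1 3 4 6, minor4 c 1 3 5 6,
    minor4 c 1 4 5 6, minor4 c 2 3 4 5, minor4 c 2 3 4 6, minor4 c 2 3 5 6, minor4 c 2 4 5 6,
    minor4 c 3 4 5 6}" (is "_ = ?M")
proof
  show "minors4 c \<subseteq> ?M"
  proof
    fix f assume "f \<in> minors4 c"
    then obtain r where f: "f = det4 (\<lambda>i. Dmat c (r i))"
      and "\<forall>i\<in>{1..4}. r i \<in> {1..6}" and "\<forall>i\<in>{1..4}. \<forall>j\<in>{1..4}. i < j \<longrightarrow> r i < r j"
      unfolding minors4_def by blast
    then have "(r 1, r 2, r 3, r 4) \<in> {(1,2,3,4), (1,2,3,5), (1,2,3,6), (1,2,4,5), (1,2,4,6),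
        (1,2,5,6), (1,3,4,5), (1,3,4,6), (1,3,5,6), (1,4,5,6), (2,3,4,5), (2,3,4,6), (2,3,5,6),
        (2,4,5,6), (3,4,5,6)}"
      by (intro increasing4_cases) (simp_all add: atLeastAtMost_1_4)
    moreover have "f = minor4 c (r 1) (r 2) (r 3) (r 4)"
      unfolding f minor4_def by (rule det4_cong_rows) simp_all
    ultimately show "f \<in> ?M"
      by (elim insertE emptyE) simp_all
  qed
  show "?M \<subseteq> minors4 c"
    by (simp add: minor4_mem_minors4)
qed

abbreviation quadric :: "'k::comm_ring_1 mpoly"
  where "quadric \<equiv> Var 1 * Var 2 - Var 3 * Var 4"

lemma Dmat_coeffs_A:
  "Dmat (coeffs_A q) 1 1 = - Var 2" "Dmat (coeffs_A q) 1 2 = Var 1"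
  "Dmat (coeffs_A q) 1 3 = 0" "Dmat (coeffs_A q) 1 4 = 0"
  "Dmat (coeffs_A q) 2 1 = 0" "Dmat (coeffs_A q) 2 2 = Var 3"
  "Dmat (coeffs_A q) 2 3 = - Var 2" "Dmat (coeffs_A q) 2 4 = 0"
  "Dmat (coeffs_A q) 3 1 = - Var 3" "Dmat (coeffs_A q) 3 2 = 0"
  "Dmat (coeffs_A q) 3 3 = Var 1" "Dmat (coeffs_A q) 3 4 = 0"
  "Dmat (coeffs_A q) 4 1 = Var 4" "Dmat (coeffs_A q) 4 2 = - (Const q * Var 1)"
  "Dmat (coeffs_A q) 4 3 = Const q * Var 4" "Dmat (coeffs_A q) 4 4 = - Var 1"
  "Dmat (coeffs_A q) 5 1 = 0" "Dmat (coeffs_A q) 5 2 = Var 4"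
  "Dmat (coeffs_A q) 5 3 = 0" "Dmat (coeffs_A q) 5 4 = - Var 2"
  "Dmat (coeffs_A q) 6 1 = 0" "Dmat (coeffs_A q) 6 2 = 0"
  "Dmat (coeffs_A q) 6 3 = Var 4" "Dmat (coeffs_A q) 6 4 = - Var 3"
  unfolding Dmat_def atLeastAtMost_1_4 by (simp_all add: coeffs_A_def Const_def single_uminus)

lemma minor4_coeffs_A:
  "minor4 (coeffs_A q) 1 2 3 4 = 0" "minor4 (coeffs_A q) 1 2 3 5 = 0"
  "minor4 (coeffs_A q) 1 2 3 6 = 0" "minor4 (coeffs_A q) 1 2 5 6 = 0"
  "minor4 (coeffs_A q) 1 3 5 6 = 0" "minor4 (coeffs_A q) 2 3 5 6 = 0"
  "minor4 (coeffs_A q) 2 4 5 6 = 0"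
  "minor4 (coeffs_A q) 1 2 4 5 = Const (- q) * Var 2 * (Var 2 * quadric)"
  "minor4 (coeffs_A q) 1 2 4 6 = Const (- q) * Var 2 * (Var 3 * quadric)"
  "minor4 (coeffs_A q) 1 3 4 5 = Const q * Var 1 * (Var 2 * quadric)"
  "minor4 (coeffs_A q) 1 3 4 6 = Const q * Var 1 * (Var 3 * quadric)"
  "minor4 (coeffs_A q) 1 4 5 6 = Const q * Var 4 * (Var 2 * quadric)"
  "minor4 (coeffs_A q) 2 3 4 5 = Const q * Var 3 * (Var 2 * quadric)"
  "minor4 (coeffs_A q) 2 3 4 6 = Const q * Var 3 * (Var 3 * quadric)"
  "minor4 (coeffs_A q) 3 4 5 6 = Const q * Var 4 * (Var 3 * quadric)"
  unfolding minor4_def det4_expand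
  by (simp_all add: Dmat_coeffs_A Const_uminus algebra_simps)

lemma minors4_coeffs_A_subset:
  "minors4 (coeffs_A q) \<subseteq> ideal_gen {Var 2 * quadric, Var 3 * quadric}"
  unfolding minors4_eq minor4_coeffs_A insert_subset
  by (intro conjI empty_subsetI zero_mem_ideal_gen mult_mem_ideal_gen) blast+

lemma mem_ideal_gen_minors4_if_minor4_eq:
  fixes u :: "'k::field"
  assumes "minor4 c r\<^sub>1 r\<^sub>2 r\<^sub>3 r\<^sub>4 = Const u * f" and "u \<noteq> 0"
    and "1 \<le> r\<^sub>1" "r\<^sub>1 < r\<^sub>2" "r\<^sub>2 < r\<^sub>3" "r\<^sub>3 < r\<^sub>4" "r\<^sub>4 \<le> 6"
  shows "f \<in> ideal_gen (minors4 c)"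
  using minor4_mem_minors4[of r\<^sub>1 r\<^sub>2 r\<^sub>3 r\<^sub>4 c] assms
  by (intro mem_ideal_gen_if_Const_mult_mem[of u]) simp_all

lemma Var_mult_mem_ideal_gen_minors4:
  fixes q :: "'k::field"
  assumes "q \<noteq> 0" and "j \<in> {1..4}" and "s \<in> {Var 2 * quadric, Var 3 * quadric}"
  shows "Var j * s \<in> ideal_gen (minors4 (coeffs_A q))"
proof -
  let ?I = "ideal_gen (minors4 (coeffs_A q))"
  note from_minor = mem_ideal_gen_minors4_if_minor4_eq[where c = "coeffs_A q"]
  note minor_eq = minor4_coeffs_A[of q, unfolded mult.assoc]
  have "Var 1 * (Var 2 * quadric) \<in> ?I"
    by (rule from_minor[of 1 3 4 5 q]) (simp_all add: minor_eq assms(1))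
  moreover have "Var 2 * (Var 2 * quadric) \<in> ?I"
    by (rule from_minor[of 1 2 4 5 "- q"]) (simp_all add: minor_eq assms(1))
  moreover have "Var 3 * (Var 2 * quadric) \<in> ?I"
    by (rule from_minor[of 2 3 4 5 q]) (simp_all add: minor_eq assms(1))
  moreover have "Var 4 * (Var 2 * quadric) \<in> ?I"
    by (rule from_minor[of 1 4 5 6 q]) (simp_all add: minor_eq assms(1))
  moreover have "Var 1 * (Var 3 * quadric) \<in> ?I"
    by (rule from_minor[of 1 3 4 6 q]) (simp_all add: minor_eq assms(1))
  moreover have "Var 2 * (Var 3 * quadric) \<in> ?I"
    by (rule from_minor[of 1 2 4 6 "- q"]) (simp_all add: minor_eq assms(1))
  moreover have "Var 3 * (Var 3 * quadric) \<in> ?I"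
    by (rule from_minor[of 2 3 4 6 q]) (simp_all add: minor_eq assms(1))
  moreover have "Var 4 * (Var 3 * quadric) \<in> ?I"
    by (rule from_minor[of 3 4 5 6 q]) (simp_all add: minor_eq assms(1))
  moreover have "j \<in> {1, 2, 3, 4}"
    using assms(2) by auto
  ultimately show ?thesis
    using assms(3) by auto
qed

lemma quadric_multiples_subset_ideal_gen:
  "{Var 2 * quadric, Var 3 * quadric} \<subseteq> ideal_gen {Var 2 ^ 2, Var 2 * Var 3, Var 3 ^ 2}"
proof -
  have x\<^sub>2_quadric: "Var 2 * quadric = Var 1 * Var 2 ^ 2 + (- Var 4) * (Var 2 * Var 3)"
    and x\<^sub>3_quadric: "Var 3 * quadric = Var 1 * (Var 2 * Var 3) + (- Var 4) * Var 3 ^ 2"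
    by (simp_all add: algebra_simps power2_eq_square)
  show ?thesis
    unfolding insert_subset x\<^sub>2_quadric x\<^sub>3_quadric
    by (intro conjI empty_subsetI add_mem_ideal_gen mult_mem_ideal_gen; simp)
qed

theorem proposition2:
  fixes q :: "'k::field"
  assumes "alg_closed_field TYPE('k)"
    and "(2::'k) \<noteq> 0"
    and "q \<noteq> 0"
  shows "point_scheme (coeffs_A q) =
           Vsch {Var 2 * (Var 1 * Var 2 - Var 3 * Var 4),
                 Var 3 * (Var 1 * Var 2 - Var 3 * Var 4)}
    \<and> point_scheme (coeffs_A q) \<subseteq> Vsch {Var 2 ^ 2, Var 2 * Var 3, Var 3 ^ 2}"
proof -
  have "point_scheme (coeffs_A q) = Vsch {Var 2 * quadric, Var 3 * quadric}"
    unfolding point_scheme_def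
  proof (rule subset_antisym)
    show "Vsch (minors4 (coeffs_A q)) \<subseteq> Vsch {Var 2 * quadric, Var 3 * quadric}"
      by (intro Vsch_subset minors4_coeffs_A_subset)
    show "Vsch {Var 2 * quadric, Var 3 * quadric} \<subseteq> Vsch (minors4 (coeffs_A q))"
      by (intro Vsch_subset_if_Var_mult Var_mult_mem_ideal_gen_minors4 \<open>q \<noteq> 0\<close>)
  qed
  moreover have "Vsch {Var 2 * quadric, Var 3 * quadric} \<subseteq> Vsch {Var 2 ^ 2, Var 2 * Var 3, Var 3 ^ 2}"
    by (intro Vsch_subset quadric_multiples_subset_ideal_gen)
  ultimately show ?thesis
    by simp
qed

end
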